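(* Let $N\in\mathbb{N}$, $K\in\mathbb{N}$ with $K<N$, and let $h,p_1,\dots,p_T\in[0,1]$ satisfy $$h=\sum_{i=1}^T p_i\le \frac{K-\sqrt K}{N}.$$ Let $X_1,\dots,X_T$ be independent random variables with $X_i\sim\mathrm{Bin}(N,p_i)$. Then $$\mathbb{P}\Big(\bigvee_{i=1}^T (X_i>K)\Big)\le\left(\frac{eNh}{K}\right)^K e^{-Nh}.$$
   Context: $\mathrm{Bin}(n,p)$ denotes the binomial distribution with $n$ trials and success probability $p$. *)

theory Defs
  imports "HOL-Probability.Probability"
begin

end

theory Submission
  imports Defs
begin

text \<open>
  By the union bound it suffices to bound the sum of the binomial tails. For \<open>r > 1\<close>,
  Markov's inequality applied to \<open>r ^ X - 1\<close> gives
  \<open>P(X\<^sub>i > K) \<le> (E r ^ X\<^sub>i - 1) / (r ^ K - 1) \<le> (exp (N p\<^sub>i (r - 1)) - 1) / (r ^ K - 1)\<close>.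
  As \<open>exp a - 1\<close> is superadditive for \<open>a \<ge> 0\<close>, the sum over \<open>i\<close> is at most
  \<open>(exp (N h (r - 1)) - 1) / (r ^ K - 1)\<close>, and the choice \<open>r = K / (N h)\<close> turns this into
  the claimed bound.
\<close>

lemma expectation_binomial_pmf_power:
  fixes p r :: real
  assumes "p \<in> {0..1}"
  shows "measure_pmf.expectation (binomial_pmf N p) (\<lambda>k. r ^ k) = (1 + p * (r - 1)) ^ N"
proof -
  have "measure_pmf.expectation (binomial_pmf N p) (\<lambda>k. r ^ k)
      = (\<Sum>k\<le>N. real (N choose k) * (p * r) ^ k * (1 - p) ^ (N - k))"
    using assms by (simp add: expectation_binomial_pmf' power_mult_distrib mult_ac)
  also have "\<dots> = (p * r + (1 - p)) ^ N"
    by (simp add: binomial_ring)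
  finally show ?thesis
    by (simp add: algebra_simps)
qed

lemma binomial_tail_le_exp:
  fixes p r :: real
  assumes p: "p \<in> {0..1}" and r: "r > 1" and "K > 0"
  shows "measure_pmf.prob (binomial_pmf N p) {k. K < k} \<le> (exp (N * p * (r - 1)) - 1) / (r ^ K - 1)"
proof -
  let ?B = "binomial_pmf N p"
  have rK: "r ^ K > 1"
    using r \<open>K > 0\<close> by simp
  have "measure_pmf.prob ?B {k. K < k} \<le> measure_pmf.prob ?B {k. r ^ K - 1 \<le> r ^ k - 1}"
    using r by (intro measure_pmf.finite_measure_mono) auto
  also have "\<dots> \<le> measure_pmf.expectation ?B (\<lambda>k. r ^ k - 1) / (r ^ K - 1)"
    using integral_Markov_inequality_measure[of ?B "\<lambda>k. r ^ k - 1" UNIV "r ^ K - 1"] r rK p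
    by simp
  also have "measure_pmf.expectation ?B (\<lambda>k. r ^ k - 1) = (1 + p * (r - 1)) ^ N - 1"
    using p by (simp add: expectation_binomial_pmf_power)
  also have "(1 + p * (r - 1)) ^ N \<le> exp (p * (r - 1)) ^ N"
    using p r by (intro power_mono) (auto simp: exp_ge_add_one_self)
  also have "exp (p * (r - 1)) ^ N = exp (N * p * (r - 1))"
    by (simp add: exp_of_nat_mult[symmetric] mult.assoc)
  finally show ?thesis
    using rK by (simp add: divide_right_mono)
qed

lemma sum_exp_minus_one_le:
  fixes a :: "'a \<Rightarrow> real"
  assumes "finite I" "\<And>i. i \<in> I \<Longrightarrow> a i \<ge> 0"
  shows "(\<Sum>i\<in>I. exp (a i) - 1) \<le> exp (\<Sum>i\<in>I. a i) - 1"
  using assms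
proof (induction I rule: finite_induct)
  case (insert x F)
  have "0 \<le> (exp (a x) - 1) * (exp (\<Sum>i\<in>F. a i) - 1)"
    using insert.prems by (intro mult_nonneg_nonneg) (auto intro: sum_nonneg)
  with insert show ?case
    by (simp add: exp_add algebra_simps)
qed simp

lemma exp_minus_one_div_power_minus_one_le:
  fixes \<mu> :: real and K :: nat
  assumes "0 < \<mu>" "\<mu> < K"
  shows "(exp (K - \<mu>) - 1) / ((K / \<mu>) ^ K - 1) \<le> (exp 1 * \<mu> / K) ^ K * exp (- \<mu>)"
proof -
  define x where "x = \<mu> / K"
  have x: "0 < x" "x < 1"
    using assms by (auto simp: x_def)
  have "K * (1 - x) \<le> K * (- ln x)"
    using ln_le_minus_one[OF \<open>0 < x\<close>] by (intro mult_left_mono) auto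
  then have "exp (K * (1 - x)) \<le> exp (K * ln (1 / x))"
    using x by (simp add: ln_div)
  also have "exp (K * ln (1 / x)) = (K / \<mu>) ^ K"
    using assms by (simp add: exp_of_nat_mult x_def)
  also have "K * (1 - x) = K - \<mu>"
    using assms by (simp add: x_def field_simps)
  finally have le: "exp (K - \<mu>) \<le> (K / \<mu>) ^ K" .
  have gt: "(K / \<mu>) ^ K > 1"
    using assms by (simp add: one_less_power)
  have frac_le: "(a - 1) / (b - 1) \<le> a / b" if "a \<le> b" "1 < b" for a b :: real
    using that by (simp add: field_simps)
  have "(exp (K - \<mu>) - 1) / ((K / \<mu>) ^ K - 1) \<le> exp (K - \<mu>) / (K / \<mu>) ^ K"
    using le gt by (rule frac_le)
  also have "\<dots> = (exp 1 * \<mu> / K) ^ K * exp (- \<mu>)"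
    by (simp add: exp_diff exp_minus exp_of_nat_mult[symmetric] power_mult_distrib
        power_divide field_simps)
  finally show ?thesis .
qed

lemma sum_binomial_tail_le:
  fixes p :: "'a \<Rightarrow> real" and \<mu> :: real
  assumes "finite I" and p: "\<And>i. i \<in> I \<Longrightarrow> p i \<in> {0..1}"
    and \<mu>: "\<mu> = N * (\<Sum>i\<in>I. p i)" "0 < \<mu>" "\<mu> < K"
  shows "(\<Sum>i\<in>I. measure_pmf.prob (binomial_pmf N (p i)) {k. K < k})
           \<le> (exp 1 * \<mu> / K) ^ K * exp (- \<mu>)"
proof -
  define r where "r = K / \<mu>"
  have "K > 0" "r > 1"
    using \<mu> by (auto simp: r_def)
  have rK: "r ^ K > 1"
    using \<open>K > 0\<close> \<open>r > 1\<close> by simp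
  have "(\<Sum>i\<in>I. measure_pmf.prob (binomial_pmf N (p i)) {k. K < k})
      \<le> (\<Sum>i\<in>I. (exp (N * p i * (r - 1)) - 1) / (r ^ K - 1))"
    using p \<open>K > 0\<close> \<open>r > 1\<close> by (intro sum_mono binomial_tail_le_exp) auto
  also have "\<dots> = (\<Sum>i\<in>I. exp (N * p i * (r - 1)) - 1) / (r ^ K - 1)"
    by (simp add: sum_divide_distrib)
  also have "\<dots> \<le> (exp (\<Sum>i\<in>I. N * p i * (r - 1)) - 1) / (r ^ K - 1)"
    using rK p \<open>r > 1\<close> \<open>finite I\<close>
    by (intro divide_right_mono sum_exp_minus_one_le) auto
  also have "(\<Sum>i\<in>I. N * p i * (r - 1)) = \<mu> * (r - 1)"
    by (simp add: \<mu>(1) sum_distrib_left sum_distrib_right)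
  also have "\<mu> * (r - 1) = K - \<mu>"
    using \<mu>(2) by (simp add: r_def field_simps)
  also have "(exp (K - \<mu>) - 1) / (r ^ K - 1) \<le> (exp 1 * \<mu> / K) ^ K * exp (- \<mu>)"
    unfolding r_def using \<mu>(2,3) by (rule exp_minus_one_div_power_minus_one_le)
  finally show ?thesis .
qed

lemma (in prob_space) prob_exists_le_sum_distr:
  assumes "finite I"
    and "\<And>i. i \<in> I \<Longrightarrow> random_variable (count_space UNIV) (X i)"
    and "\<And>i. i \<in> I \<Longrightarrow> distr M (count_space UNIV) (X i) = measure_pmf (q i)"
  shows "prob {\<omega> \<in> space M. \<exists>i\<in>I. X i \<omega> \<in> A} \<le> (\<Sum>i\<in>I. measure_pmf.prob (q i) A)"
proof -
  have "{\<omega> \<in> space M. \<exists>i\<in>I. X i \<omega> \<in> A} = (\<Union>i\<in>I. X i -` A \<inter> space M)"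
    by auto
  also have "prob \<dots> \<le> (\<Sum>i\<in>I. prob (X i -` A \<inter> space M))"
    using assms(2) by (intro finite_measure_subadditive_finite \<open>finite I\<close>) auto
  also have "\<dots> = (\<Sum>i\<in>I. measure_pmf.prob (q i) A)"
  proof (intro sum.cong refl)
    fix i assume "i \<in> I"
    then have "prob (X i -` A \<inter> space M) = measure (distr M (count_space UNIV) (X i)) A"
      using assms(2) by (simp add: measure_distr)
    with \<open>i \<in> I\<close> show "prob (X i -` A \<inter> space M) = measure_pmf.prob (q i) A"
      using assms(3) by simp
  qed
  finally show ?thesis .
qed

theorem lemma10:
  fixes M :: "'a measure" and X :: "nat \<Rightarrow> 'a \<Rightarrow> nat"
    and N K T :: nat and h :: real and p :: "nat \<Rightarrow> real"
  assumes "prob_space M"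
    and "K < N"
    and "h \<in> {0..1}"
    and "\<And>i. i \<in> {1..T} \<Longrightarrow> p i \<in> {0..1}"
    and "h = (\<Sum>i=1..T. p i)"
    and "h \<le> (real K - sqrt (real K)) / real N"
    and "prob_space.indep_vars M (\<lambda>_. count_space UNIV) X {1..T}"
    and "\<And>i. i \<in> {1..T} \<Longrightarrow>
           distr M (count_space UNIV) (X i) = measure_pmf (binomial_pmf N (p i))"
  shows "measure M {\<omega> \<in> space M. \<exists>i\<in>{1..T}. X i \<omega> > K}
           \<le> (exp 1 * real N * h / real K) ^ K * exp (- real N * h)"
proof -
  interpret prob_space M by fact
  have "random_variable (count_space UNIV) (X i)" if "i \<in> {1..T}" for i
    using assms(7) that by (auto simp: indep_vars_def)
  then have "prob {\<omega> \<in> space M. \<exists>i\<in>{1..T}. X i \<omega> > K}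
      \<le> (\<Sum>i=1..T. measure_pmf.prob (binomial_pmf N (p i)) {k. K < k})"
    using prob_exists_le_sum_distr[of "{1..T}" X "\<lambda>i. binomial_pmf N (p i)" "{k. K < k}"] assms(8)
    by simp
  also have "\<dots> \<le> (exp 1 * real N * h / real K) ^ K * exp (- real N * h)"
  proof (cases "h = 0")
    case True
    then have "p i = 0" if "i \<in> {1..T}" for i
      using assms(4,5) sum_nonneg_eq_0_iff[of "{1..T}" p] that by auto
    moreover have "measure_pmf.prob (binomial_pmf N 0) {k. K < k} = 0"
      by (simp add: measure_pmf_zero_iff)
    ultimately show ?thesis
      using assms(3) by simp
  next
    case False
    then have "0 < N * h"
      using assms(2,3) by simp
    moreover have Nh_le: "N * h \<le> K - sqrt K"
      using assms(2,6) by (simp add: field_simps)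
    ultimately have "K > 0"
      by (intro gr0I) simp
    then have "N * h < K"
      using Nh_le real_sqrt_gt_zero[of K] by linarith
    with \<open>0 < N * h\<close> show ?thesis
      using sum_binomial_tail_le[of "{1..T}" p "N * h" N K] assms(4,5) by (simp add: mult.assoc)
  qed
  finally show ?thesis .
qed

end
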